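(* Let $(x,y)\in\mathbb R^d\times\{-1,+1\}$ be distributed so that the coordinates $x_1,\dots,x_d$ are mutually independent conditionally on $y$, and for each $i$ there are constants $\mu_i,\sigma_i\ge 0$ with $\mathbb E[x_i\mid y]=y\mu_i$ and $\operatorname{Var}(x_i\mid y)=\sigma_i^2$ for both $y\in\{-1,1\}$. Let $\mu=(\mu_1,\dots,\mu_d)\neq 0$, $\bar\sigma_\mu^2=\frac{\sum_{i=1}^d\mu_i^2\sigma_i^2}{\sum_{i=1}^d\mu_i^2}$, let $\lambda>0$, and let $w^*$ be a minimizer of $\mathcal L(w)=\mathbb E[\max(0,1-yw^\top x)]+\frac{\lambda}{2}\|w\|_2^2$. Then $$\|w^*\|_2\ge \frac{1}{\|\mu\|_2}\left(1-\frac12\left(\frac{\bar\sigma_\mu}{\|\mu\|_2}+\frac{\lambda}{2\|\mu\|_2^2}\right)\right).$$ *)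

theory Defs
  imports "HOL-Probability.Probability"
begin

definition hinge_risk ::
  "'a measure \<Rightarrow> ('a \<Rightarrow> real ^ 'd) \<Rightarrow> ('a \<Rightarrow> real) \<Rightarrow> real \<Rightarrow> real ^ 'd \<Rightarrow> real" where
  "hinge_risk M X Y lam w =
     (\<integral>\<omega>. max 0 (1 - Y \<omega> * (w \<bullet> X \<omega>)) \<partial>M) + lam / 2 * (norm w)^2"

definition sigma_bar :: "real ^ 'd \<Rightarrow> ('d \<Rightarrow> real) \<Rightarrow> real" where
  "sigma_bar \<mu> \<sigma> = sqrt ((\<Sum>i\<in>UNIV. (\<mu> $ i)^2 * (\<sigma> i)^2) / (\<Sum>i\<in>UNIV. (\<mu> $ i)^2))"

end

theory Submission
  imports Defs
begin

text \<open>
  Put \<open>v = \<mu> / \<parallel>\<mu>\<parallel>\<^sup>2\<close>. Conditionally on the label, the coordinates of \<open>x\<close> are independent,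
  so the margin \<open>y v\<^sup>T x\<close> has mean \<open>v\<^sup>T \<mu> = 1\<close> and variance \<open>\<Sum> v\<^sub>i\<^sup>2 \<sigma>\<^sub>i\<^sup>2 = \<sigma>\<^sub>\<mu>\<^sup>2 / \<parallel>\<mu>\<parallel>\<^sup>2\<close>;
  as \<open>max 0 (1 - z) = (1 - z + \<bar>z - 1\<bar>) / 2\<close>, the expected hinge loss at \<open>v\<close> is at most
  \<open>\<sigma>\<^sub>\<mu> / (2 \<parallel>\<mu>\<parallel>)\<close>. Conversely, Jensen bounds the expected hinge loss at any \<open>w\<close> below by
  \<open>1 - w\<^sup>T \<mu>\<close>. The regularised risk is \<open>\<lambda>\<close>-strongly convex, so its minimiser satisfies
  \<open>L(w\<^sup>*) + \<lambda>/2 \<parallel>v - w\<^sup>*\<parallel>\<^sup>2 \<le> L(v)\<close>. Inserting both bounds and Cauchy-Schwarz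
  \<open>w\<^sup>T \<mu> \<le> \<parallel>w\<parallel> \<parallel>\<mu>\<parallel>\<close> leaves the quadratic inequality \<open>(1 - A) (1 - \<lambda> A / \<parallel>\<mu>\<parallel>\<^sup>2) \<le> \<sigma>\<^sub>\<mu> / (2 \<parallel>\<mu>\<parallel>)\<close>
  in \<open>A = \<parallel>w\<^sup>*\<parallel> \<parallel>\<mu>\<parallel>\<close>, which forces \<open>A \<ge> 1 - \<sigma>\<^sub>\<mu> / (2 \<parallel>\<mu>\<parallel>) - \<lambda> / (4 \<parallel>\<mu>\<parallel>\<^sup>2)\<close>.
\<close>

lemma uniform_measure_eq_density:
  assumes "finite_measure M" "measure M A > 0"
  shows "uniform_measure M A = density M (\<lambda>x. ennreal (indicator A x / measure M A))"
proof -
  interpret finite_measure M by fact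
  show ?thesis
    unfolding uniform_measure_def using assms(2)
    by (intro arg_cong[where f="density M"] ext)
       (simp add: emeasure_eq_measure divide_ennreal ennreal_indicator[symmetric])
qed

lemma integral_indicator_mult_eq_uniform_measure:
  fixes f :: "'a \<Rightarrow> real"
  assumes "finite_measure M" "A \<in> sets M" "f \<in> borel_measurable M"
    and "measure M A > 0 \<Longrightarrow> integrable (uniform_measure M A) f"
  shows "integrable M (\<lambda>x. indicator A x * f x)"
    and "(\<integral>x. indicator A x * f x \<partial>M) = measure M A * integral\<^sup>L (uniform_measure M A) f"
proof -
  interpret finite_measure M by fact
  have "integrable M (\<lambda>x. indicator A x * f x) \<and>
        (\<integral>x. indicator A x * f x \<partial>M) = measure M A * integral\<^sup>L (uniform_measure M A) f"
  proof (cases "measure M A > 0")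
    case True
    define g where "g x = indicator A x / measure M A" for x
    have g_meas: "g \<in> borel_measurable M"
      unfolding g_def using assms(2) by measurable
    have g_nonneg: "AE x in M. 0 \<le> g x"
      by (simp add: g_def)
    have "integrable M (\<lambda>x. g x *\<^sub>R f x)"
      using assms(4)[OF True] integrable_density[OF assms(3) g_meas g_nonneg]
      by (simp add: uniform_measure_eq_density[OF assms(1) True, folded g_def])
    moreover have "integral\<^sup>L (uniform_measure M A) f = (\<integral>x. g x *\<^sub>R f x \<partial>M)"
      using integral_density[OF assms(3) g_meas g_nonneg]
      by (simp add: uniform_measure_eq_density[OF assms(1) True, folded g_def])
    moreover have "(\<lambda>x. indicator A x * f x) = (\<lambda>x. measure M A * (g x *\<^sub>R f x))"
      using True by (simp add: g_def)
    ultimately show ?thesis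
      by simp
  next
    case False
    then have "A \<in> null_sets M"
      using assms(2) measure_nonneg[of M A] by (auto simp: null_sets_def emeasure_eq_measure)
    then have "AE x in M. indicator A x * f x = 0"
      by (auto dest!: AE_not_in elim!: AE_mp)
    then show ?thesis
      using False measure_nonneg[of M A] assms(2,3)
      by (auto simp: integrable_cong_AE[where g="\<lambda>_. 0"] integral_cong_AE[where g="\<lambda>_. 0"])
  qed
  then show "integrable M (\<lambda>x. indicator A x * f x)"
    and "(\<integral>x. indicator A x * f x \<partial>M) = measure M A * integral\<^sup>L (uniform_measure M A) f"
    by blast+
qed

lemma integral_eq_if_conditional_integrals_eq:
  fixes f Y :: "'a \<Rightarrow> real"
  assumes "prob_space M" "finite S" "Y \<in> borel_measurable M" "\<forall>\<omega>\<in>space M. Y \<omega> \<in> S"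
    and "f \<in> borel_measurable M"
    and cond: "\<And>c. c \<in> S \<Longrightarrow> measure M {\<omega>\<in>space M. Y \<omega> = c} > 0 \<Longrightarrow>
      integrable (uniform_measure M {\<omega>\<in>space M. Y \<omega> = c}) f \<and>
      integral\<^sup>L (uniform_measure M {\<omega>\<in>space M. Y \<omega> = c}) f = K"
  shows "integrable M f \<and> integral\<^sup>L M f = K"
proof -
  interpret prob_space M by fact
  define A where "A c = {\<omega>\<in>space M. Y \<omega> = c}" for c
  have A_sets: "A c \<in> sets M" for c
    unfolding A_def using assms(3) by measurable
  have class_piece: "integrable M (\<lambda>\<omega>. indicator (A c) \<omega> * f \<omega>)
      \<and> (\<integral>\<omega>. indicator (A c) \<omega> * f \<omega> \<partial>M) = measure M (A c) * K" if "c \<in> S" for c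
    using integral_indicator_mult_eq_uniform_measure[OF finite_measure_axioms A_sets assms(5)]
      cond[OF that] measure_nonneg[of M "A c"] by (fastforce simp: A_def less_le)
  have label_split: "f \<omega> = (\<Sum>c\<in>S. indicator (A c) \<omega> * f \<omega>)" if "\<omega> \<in> space M" for \<omega>
    using that assms(2,4) by (simp add: A_def indicator_def eq_commute[of "Y \<omega>"])
  have "(\<Sum>c\<in>S. measure M (A c)) = measure M (\<Union>c\<in>S. A c)"
    using assms(2) A_sets by (intro measure_finite_Union[symmetric]) (auto simp: disjoint_family_on_def A_def)
  also have "(\<Union>c\<in>S. A c) = space M"
    using assms(4) by (auto simp: A_def)
  finally have total: "(\<Sum>c\<in>S. measure M (A c)) = 1"
    by (simp add: prob_space)
  have "integrable M (\<lambda>\<omega>. \<Sum>c\<in>S. indicator (A c) \<omega> * f \<omega>)"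
    using class_piece by auto
  then have "integrable M f"
    using label_split by (subst Bochner_Integration.integrable_cong) auto
  have "integral\<^sup>L M f = (\<integral>\<omega>. (\<Sum>c\<in>S. indicator (A c) \<omega> * f \<omega>) \<partial>M)"
    using label_split by (rule Bochner_Integration.integral_cong[OF refl])
  also have "\<dots> = (\<Sum>c\<in>S. measure M (A c) * K)"
    using class_piece by (simp add: Bochner_Integration.integral_sum)
  also have "\<dots> = K"
    by (simp add: sum_distrib_right[symmetric] total)
  finally show ?thesis
    using \<open>integrable M f\<close> by simp
qed

lemma (in prob_space) moments_inner_indep_coordinates:
  fixes X :: "'a \<Rightarrow> real ^ 'd" and m w :: "real ^ 'd" and s :: "'d \<Rightarrow> real"
  assumes indep: "indep_vars (\<lambda>_. borel) (\<lambda>i \<omega>. X \<omega> $ i) UNIV"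
    and square_integrable: "\<And>i. integrable M (\<lambda>\<omega>. (X \<omega> $ i)^2)"
    and mean: "\<And>i. expectation (\<lambda>\<omega>. X \<omega> $ i) = m $ i"
    and var: "\<And>i. expectation (\<lambda>\<omega>. (X \<omega> $ i - m $ i)^2) = (s i)^2"
  shows "integrable M (\<lambda>\<omega>. X \<omega> \<bullet> w)"
    and "expectation (\<lambda>\<omega>. X \<omega> \<bullet> w) = m \<bullet> w"
    and "integrable M (\<lambda>\<omega>. (X \<omega> \<bullet> w - m \<bullet> w)^2)"
    and "expectation (\<lambda>\<omega>. (X \<omega> \<bullet> w - m \<bullet> w)^2) = (\<Sum>i\<in>UNIV. (w $ i)^2 * (s i)^2)"
proof -
  have meas: "(\<lambda>\<omega>. X \<omega> $ i) \<in> borel_measurable M" for i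
    using indep unfolding indep_vars_def by auto
  have int: "integrable M (\<lambda>\<omega>. X \<omega> $ i)" for i
    using square_integrable_imp_integrable[OF meas square_integrable] by simp
  show "integrable M (\<lambda>\<omega>. X \<omega> \<bullet> w)"
    unfolding inner_vec_def using int by auto
  show "expectation (\<lambda>\<omega>. X \<omega> \<bullet> w) = m \<bullet> w"
    unfolding inner_vec_def using int mean by (simp add: Bochner_Integration.integral_sum)
  define D where "D i \<omega> = X \<omega> $ i - m $ i" for i \<omega>
  have int_D: "integrable M (D i)" for i
    unfolding D_def using int by auto
  have mean_D: "expectation (D i) = 0" for i
    unfolding D_def using int mean by (simp add: prob_space)
  have diagonal: "integrable M (\<lambda>\<omega>. D i \<omega> * D i \<omega>) \<and> expectation (\<lambda>\<omega>. D i \<omega> * D i \<omega>) = (s i)^2" for i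
  proof -
    have "(\<lambda>\<omega>. D i \<omega> * D i \<omega>) = (\<lambda>\<omega>. (X \<omega> $ i)^2 - 2 * m $ i * X \<omega> $ i + (m $ i)^2)"
      unfolding D_def by (auto simp: power2_eq_square algebra_simps)
    then show ?thesis
      using square_integrable int var[of i] mean[of i] by (simp add: D_def power2_eq_square)
  qed
  have off_diagonal: "integrable M (\<lambda>\<omega>. D i \<omega> * D j \<omega>) \<and> expectation (\<lambda>\<omega>. D i \<omega> * D j \<omega>) = 0"
    if "i \<noteq> j" for i j
  proof -
    have "indep_vars (\<lambda>_. borel) D {i, j}"
      unfolding D_def by (rule indep_vars_subset[OF indep_vars_compose2[OF indep]]) auto
    moreover have "(\<lambda>\<omega>. \<Prod>k\<in>{i, j}. D k \<omega>) = (\<lambda>\<omega>. D i \<omega> * D j \<omega>)"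
      using that by auto
    ultimately show ?thesis
      using indep_vars_integrable[of "{i, j}" D] indep_vars_lebesgue_integral[of "{i, j}" D]
        int_D mean_D that by auto
  qed
  have int_DD: "integrable M (\<lambda>\<omega>. D i \<omega> * D j \<omega>)" for i j
    using diagonal off_diagonal by (cases "i = j") simp_all
  have mean_DD: "expectation (\<lambda>\<omega>. D i \<omega> * D j \<omega>) = (if i = j then (s i)^2 else 0)" for i j
    using diagonal off_diagonal by (cases "i = j") simp_all
  have expand: "(X \<omega> \<bullet> w - m \<bullet> w)^2 = (\<Sum>i\<in>UNIV. \<Sum>j\<in>UNIV. w $ i * w $ j * (D i \<omega> * D j \<omega>))" for \<omega>
  proof -
    have "X \<omega> \<bullet> w - m \<bullet> w = (\<Sum>i\<in>UNIV. w $ i * D i \<omega>)"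
      unfolding inner_vec_def D_def by (simp add: sum_subtractf[symmetric] algebra_simps)
    then show ?thesis
      by (simp add: power2_eq_square sum_product algebra_simps)
  qed
  show "integrable M (\<lambda>\<omega>. (X \<omega> \<bullet> w - m \<bullet> w)^2)"
    unfolding expand using int_DD by auto
  show "expectation (\<lambda>\<omega>. (X \<omega> \<bullet> w - m \<bullet> w)^2) = (\<Sum>i\<in>UNIV. (w $ i)^2 * (s i)^2)"
    unfolding expand using int_DD
    by (simp add: Bochner_Integration.integral_sum mean_DD if_distrib power2_eq_square cong: if_cong)
qed

lemma quadratic_le_imp_ge:
  fixes A L s :: real
  assumes "L > 0" "s \<ge> 0" "(1 - A) * (1 - L * A) \<le> s"
  shows "A \<ge> 1 - s - L / 4"
proof (rule ccontr)
  \<comment> \<open>\<open>(1 - A) (1 - L A)\<close> decreases on \<open>A \<le> (1 + L) / (2 L)\<close> and exceeds \<open>s\<close> by a square at \<open>T\<close>\<close>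
  define T where "T = 1 - s - L / 4"
  assume "\<not> A \<ge> T"
  then have "A < T"
    by (simp add: T_def)
  have "2 * L * T \<le> 2 * L * (1 - L / 4)"
    using assms(1,2) by (simp add: T_def)
  also have "\<dots> \<le> 1 + L"
    using sum_power2_ge_zero[of "L - 1" 1] by (simp add: algebra_simps power2_eq_square)
  moreover have "L * A < L * T"
    using \<open>A < T\<close> assms(1) by simp
  ultimately have "L * (A + T) < 1 + L"
    by (simp add: algebra_simps)
  then have "(1 - T) * (1 - L * T) < (1 - A) * (1 - L * A)"
    using \<open>A < T\<close> mult_pos_pos[of "T - A" "1 + L - L * (A + T)"] by (simp add: algebra_simps)
  moreover have "(1 - T) * (1 - L * T) = s + L * (s - (1 - L / 2) / 2)^2"
    by (simp add: T_def field_simps power2_eq_square)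
  moreover have "0 \<le> L * (s - (1 - L / 2) / 2)^2"
    using assms(1) by simp
  ultimately show False
    using assms(3) by linarith
qed

lemma convex_on_expected_hinge:
  fixes X :: "'a \<Rightarrow> 'v::real_inner" and Y :: "'a \<Rightarrow> real"
  assumes "finite_measure M" "\<And>w. integrable M (\<lambda>\<omega>. Y \<omega> * (w \<bullet> X \<omega>))"
  shows "convex_on UNIV (\<lambda>w. \<integral>\<omega>. max 0 (1 - Y \<omega> * (w \<bullet> X \<omega>)) \<partial>M)"
proof (rule convex_onI)
  interpret finite_measure M by fact
  fix t :: real and u v :: 'v
  assume t: "0 < t" "t < 1"
  let ?h = "\<lambda>w \<omega>. max 0 (1 - Y \<omega> * (w \<bullet> X \<omega>))"
  have int: "integrable M (?h w)" for w
    using assms(2)[of w] by auto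
  have pointwise: "?h ((1 - t) *\<^sub>R u + t *\<^sub>R v) \<omega> \<le> (1 - t) * ?h u \<omega> + t * ?h v \<omega>" for \<omega>
  proof -
    have "1 - Y \<omega> * (((1 - t) *\<^sub>R u + t *\<^sub>R v) \<bullet> X \<omega>)
        = (1 - t) * (1 - Y \<omega> * (u \<bullet> X \<omega>)) + t * (1 - Y \<omega> * (v \<bullet> X \<omega>))"
      by (simp add: algebra_simps)
    moreover have "(1 - t) * a + t * b \<le> (1 - t) * max 0 a + t * max 0 b" for a b :: real
      using t by (intro add_mono mult_left_mono) auto
    ultimately show ?thesis
      using t by simp
  qed
  have "(\<integral>\<omega>. ?h ((1 - t) *\<^sub>R u + t *\<^sub>R v) \<omega> \<partial>M) \<le> (\<integral>\<omega>. (1 - t) * ?h u \<omega> + t * ?h v \<omega> \<partial>M)"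
    using int pointwise by (intro integral_mono) auto
  also have "\<dots> = (1 - t) * (\<integral>\<omega>. ?h u \<omega> \<partial>M) + t * (\<integral>\<omega>. ?h v \<omega> \<partial>M)"
    using int by simp
  finally show "(\<integral>\<omega>. ?h ((1 - t) *\<^sub>R u + t *\<^sub>R v) \<omega> \<partial>M) \<le> (1 - t) * (\<integral>\<omega>. ?h u \<omega> \<partial>M) + t * (\<integral>\<omega>. ?h v \<omega> \<partial>M)" .
qed simp

lemma (in prob_space) expected_hinge_ge:
  fixes Z :: "'a \<Rightarrow> real"
  assumes "integrable M Z"
  shows "1 - expectation Z \<le> expectation (\<lambda>\<omega>. max 0 (1 - Z \<omega>))"
proof -
  have "expectation (\<lambda>\<omega>. 1 - Z \<omega>) \<le> expectation (\<lambda>\<omega>. max 0 (1 - Z \<omega>))"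
    using assms by (intro integral_mono) auto
  then show ?thesis
    using assms by (simp add: prob_space)
qed

lemma (in prob_space) expected_hinge_le:
  fixes Z :: "'a \<Rightarrow> real"
  assumes "integrable M Z" "integrable M (\<lambda>\<omega>. (Z \<omega> - 1)^2)"
  shows "expectation (\<lambda>\<omega>. max 0 (1 - Z \<omega>)) \<le> (1 - expectation Z + sqrt (expectation (\<lambda>\<omega>. (Z \<omega> - 1)^2))) / 2"
proof -
  define E where "E = expectation (\<lambda>\<omega>. \<bar>Z \<omega> - 1\<bar>)"
  have int_abs: "integrable M (\<lambda>\<omega>. \<bar>Z \<omega> - 1\<bar>)"
    using assms(1) by auto
  \<comment> \<open>\<open>max 0 (1 - z) = ((1 - z) + \<bar>z - 1\<bar>) / 2\<close>, and \<open>E \<bar>W\<bar> \<le> sqrt (E W\<^sup>2)\<close> since the variance of \<open>\<bar>W\<bar>\<close> is nonnegative\<close>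
  have "expectation (\<lambda>\<omega>. max 0 (1 - Z \<omega>)) = expectation (\<lambda>\<omega>. ((1 - Z \<omega>) + \<bar>Z \<omega> - 1\<bar>) / 2)"
    by (intro Bochner_Integration.integral_cong) (auto simp: max_def)
  also have "\<dots> = (1 - expectation Z + E) / 2"
    using assms(1) int_abs by (simp add: E_def prob_space)
  finally have hinge: "expectation (\<lambda>\<omega>. max 0 (1 - Z \<omega>)) = (1 - expectation Z + E) / 2" .
  have "0 \<le> expectation (\<lambda>\<omega>. (\<bar>Z \<omega> - 1\<bar> - E)^2)"
    by simp
  also have "\<dots> = expectation (\<lambda>\<omega>. (Z \<omega> - 1)^2 - 2 * E * \<bar>Z \<omega> - 1\<bar> + E^2)"
    by (intro Bochner_Integration.integral_cong) (auto simp: power2_eq_square algebra_simps)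
  also have "\<dots> = expectation (\<lambda>\<omega>. (Z \<omega> - 1)^2) - E^2"
    using int_abs assms(2) by (simp add: prob_space power2_eq_square E_def)
  finally have "E \<le> sqrt (expectation (\<lambda>\<omega>. (Z \<omega> - 1)^2))"
    by (intro real_le_rsqrt) simp
  then show ?thesis
    unfolding hinge by simp
qed

lemma regularized_minimizer_quadratic_growth:
  fixes H :: "'v::real_inner \<Rightarrow> real" and v w\<^sub>0 :: 'v and lam :: real
  assumes "convex_on UNIV H" "lam \<ge> 0"
    and min: "\<And>w. H w\<^sub>0 + lam / 2 * (norm w\<^sub>0)^2 \<le> H w + lam / 2 * (norm w)^2"
  shows "H w\<^sub>0 + lam / 2 * (norm w\<^sub>0)^2 + lam / 2 * (norm (v - w\<^sub>0))^2 \<le> H v + lam / 2 * (norm v)^2"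
proof -
  define L where "L w = H w + lam / 2 * (norm w)^2" for w
  define K where "K = lam / 2 * (norm (v - w\<^sub>0))^2"
  have K: "K \<ge> 0"
    using assms(2) by (simp add: K_def)
  \<comment> \<open>compare \<open>w\<^sub>0\<close> with the points \<open>w\<^sub>0 + t (v - w\<^sub>0)\<close> and let \<open>t \<rightarrow> 0\<close>\<close>
  have along_segment: "L w\<^sub>0 + (1 - t) * K \<le> L v" if t: "0 < t" "t \<le> 1" for t
  proof -
    define w where "w = (1 - t) *\<^sub>R w\<^sub>0 + t *\<^sub>R v"
    have norm_w: "(norm w)^2 = (1 - t) * (norm w\<^sub>0)^2 + t * (norm v)^2 - t * (1 - t) * (norm (v - w\<^sub>0))^2"
      by (simp add: w_def power2_norm_eq_inner inner_commute algebra_simps)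
    have "L w\<^sub>0 \<le> H w + lam / 2 * (norm w)^2"
      using min[of w] by (simp add: L_def)
    also have "\<dots> \<le> (1 - t) * H w\<^sub>0 + t * H v + lam / 2 * (norm w)^2"
      using convex_onD[OF assms(1)] t by (simp add: w_def)
    also have "\<dots> = (1 - t) * L w\<^sub>0 + t * L v - t * (1 - t) * K"
      unfolding norm_w L_def K_def by (simp add: field_simps)
    finally have "L w\<^sub>0 \<le> (1 - t) * L w\<^sub>0 + t * L v - t * (1 - t) * K" .
    then have "t * (L w\<^sub>0 + (1 - t) * K) \<le> t * L v"
      by (simp add: algebra_simps)
    then show ?thesis
      using t by simp
  qed
  have "L w\<^sub>0 + K \<le> L v"
  proof (rule field_le_epsilon)
    fix e :: real
    assume "e > 0"
    define t where "t = min 1 (e / (K + 1))"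
    have "t > 0" "t \<le> 1" "t * K \<le> e"
      using \<open>e > 0\<close> K by (auto simp: t_def min_def field_simps mult_left_mono)
    then show "L w\<^sub>0 + K \<le> L v + e"
      using along_segment[of t] by (simp add: algebra_simps)
  qed
  then show ?thesis
    by (simp add: L_def K_def)
qed

lemma hinge_minimizer_norm_lower_bound:
  fixes H :: "'v::real_inner \<Rightarrow> real" and \<mu> w\<^sub>0 :: 'v and lam s :: real
  assumes "convex_on UNIV H" "lam > 0" "\<mu> \<noteq> 0" "s \<ge> 0"
    and H_ge: "\<And>w. 1 - w \<bullet> \<mu> \<le> H w"
    and H_le: "H ((1 / (norm \<mu>)^2) *\<^sub>R \<mu>) \<le> s"
    and min: "\<And>w. H w\<^sub>0 + lam / 2 * (norm w\<^sub>0)^2 \<le> H w + lam / 2 * (norm w)^2"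
  shows "(1 - s - lam / (4 * (norm \<mu>)^2)) / norm \<mu> \<le> norm w\<^sub>0"
proof -
  define m where "m = norm \<mu>"
  define v where "v = (1 / m^2) *\<^sub>R \<mu>"
  define b where "b = w\<^sub>0 \<bullet> \<mu>"
  define A where "A = norm w\<^sub>0 * m"
  define La where "La = lam / m^2"
  have m: "m > 0"
    using assms(3) by (simp add: m_def)
  have "H w\<^sub>0 + lam / 2 * (norm w\<^sub>0)^2 + lam / 2 * (norm (v - w\<^sub>0))^2 \<le> H v + lam / 2 * (norm v)^2"
    using assms(1,2) min by (intro regularized_minimizer_quadratic_growth) auto
  moreover have "(norm v)^2 = 1 / m^2"
    using m by (simp add: v_def m_def power2_eq_square)
  moreover have "v \<bullet> w\<^sub>0 = b / m^2"
    by (simp add: v_def b_def inner_commute)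
  then have "(norm (v - w\<^sub>0))^2 = (norm v)^2 - 2 * b / m^2 + (norm w\<^sub>0)^2"
    by (simp add: power2_norm_eq_inner inner_diff_left inner_diff_right inner_commute)
  moreover have "lam / 2 * (1 / m^2) = La / 2" "lam / 2 * (2 * b / m^2) = La * b"
    by (simp_all add: La_def)
  ultimately have "1 - b * (1 + La) + lam * (norm w\<^sub>0)^2 \<le> s"
    using H_ge[of w\<^sub>0] H_le unfolding v_def m_def b_def by (simp add: algebra_simps)
  moreover have "b * (1 + La) \<le> A * (1 + La)"
    using norm_cauchy_schwarz[of w\<^sub>0 \<mu>] m assms(2)
    by (intro mult_right_mono) (simp_all add: A_def b_def m_def La_def)
  moreover have "lam * (norm w\<^sub>0)^2 = La * A^2"
    using m by (simp add: La_def A_def power2_eq_square field_simps)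
  ultimately have "(1 - A) * (1 - La * A) \<le> s"
    by (simp add: algebra_simps power2_eq_square)
  then have "1 - s - La / 4 \<le> A"
    using m assms(2,4) by (intro quadratic_le_imp_ge) (simp_all add: La_def)
  then show ?thesis
    using m by (simp add: A_def La_def m_def field_simps)
qed

lemma sigma_bar_div_norm:
  fixes \<mu> :: "real ^ 'd" and \<sigma> :: "'d \<Rightarrow> real"
  assumes "\<mu> \<noteq> 0"
  shows "sqrt (\<Sum>i\<in>UNIV. (((1 / (norm \<mu>)^2) *\<^sub>R \<mu>) $ i)^2 * (\<sigma> i)^2) = sigma_bar \<mu> \<sigma> / norm \<mu>"
proof -
  have norm_sq: "(norm \<mu>)^2 = (\<Sum>i\<in>UNIV. (\<mu> $ i)^2)"
    unfolding power2_norm_eq_inner inner_vec_def by (simp add: power2_eq_square)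
  have "(\<Sum>i\<in>UNIV. (((1 / (norm \<mu>)^2) *\<^sub>R \<mu>) $ i)^2 * (\<sigma> i)^2)
      = ((\<Sum>i\<in>UNIV. (\<mu> $ i)^2 * (\<sigma> i)^2) / (\<Sum>i\<in>UNIV. (\<mu> $ i)^2)) / (norm \<mu>)^2"
    unfolding norm_sq[symmetric] using assms
    by (simp add: sum_divide_distrib field_simps)
  then show ?thesis
    unfolding sigma_bar_def by (simp add: real_sqrt_divide real_sqrt_mult)
qed

lemma (in prob_space) margin_moments_given_label:
  fixes X :: "'a \<Rightarrow> real ^ 'd" and Y :: "'a \<Rightarrow> real" and c :: real
    and \<mu> w :: "real ^ 'd" and \<sigma> :: "'d \<Rightarrow> real"
  assumes "c \<in> {-1, 1}" "AE \<omega> in M. Y \<omega> = c"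
    and [measurable]: "X \<in> borel_measurable M" "Y \<in> borel_measurable M"
    and indep: "indep_vars (\<lambda>_. borel) (\<lambda>i \<omega>. X \<omega> $ i) UNIV"
    and "\<And>i. integrable M (\<lambda>\<omega>. (X \<omega> $ i)^2)"
    and "\<And>i. expectation (\<lambda>\<omega>. X \<omega> $ i) = c * \<mu> $ i"
    and "\<And>i. expectation (\<lambda>\<omega>. (X \<omega> $ i - c * \<mu> $ i)^2) = (\<sigma> i)^2"
  shows "integrable M (\<lambda>\<omega>. Y \<omega> * (w \<bullet> X \<omega>)) \<and> expectation (\<lambda>\<omega>. Y \<omega> * (w \<bullet> X \<omega>)) = w \<bullet> \<mu>
      \<and> integrable M (\<lambda>\<omega>. (Y \<omega> * (w \<bullet> X \<omega>) - w \<bullet> \<mu>)^2)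
      \<and> expectation (\<lambda>\<omega>. (Y \<omega> * (w \<bullet> X \<omega>) - w \<bullet> \<mu>)^2) = (\<Sum>i\<in>UNIV. (w $ i)^2 * (\<sigma> i)^2)"
proof -
  note moments = moments_inner_indep_coordinates[OF indep, of "c *\<^sub>R \<mu>" \<sigma> w]
  have sign_swap: "(x - c * y)^2 = (c * x - y)^2" for x y :: real
    using assms(1) by (auto simp: power2_eq_square algebra_simps)
  have ae_margin: "AE \<omega> in M. c * (X \<omega> \<bullet> w) = Y \<omega> * (w \<bullet> X \<omega>)"
    using assms(2) by eventually_elim (simp add: inner_commute)
  have ae_square: "AE \<omega> in M. (X \<omega> \<bullet> w - (c *\<^sub>R \<mu>) \<bullet> w)^2 = (Y \<omega> * (w \<bullet> X \<omega>) - w \<bullet> \<mu>)^2"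
    using assms(2) by eventually_elim (simp add: inner_commute sign_swap)
  have meas: "(\<lambda>\<omega>. c * (X \<omega> \<bullet> w)) \<in> borel_measurable M"
    "(\<lambda>\<omega>. Y \<omega> * (w \<bullet> X \<omega>)) \<in> borel_measurable M"
    "(\<lambda>\<omega>. (X \<omega> \<bullet> w - (c *\<^sub>R \<mu>) \<bullet> w)^2) \<in> borel_measurable M"
    "(\<lambda>\<omega>. (Y \<omega> * (w \<bullet> X \<omega>) - w \<bullet> \<mu>)^2) \<in> borel_measurable M"
    by measurable
  have "expectation (\<lambda>\<omega>. Y \<omega> * (w \<bullet> X \<omega>)) = expectation (\<lambda>\<omega>. c * (X \<omega> \<bullet> w))"
    using integral_cong_AE[OF meas(1,2) ae_margin] ..
  also have "\<dots> = c * ((c *\<^sub>R \<mu>) \<bullet> w)"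
    using moments(2) assms(6-8) by simp
  also have "\<dots> = w \<bullet> \<mu>"
    using assms(1) by (auto simp: inner_commute)
  finally have "expectation (\<lambda>\<omega>. Y \<omega> * (w \<bullet> X \<omega>)) = w \<bullet> \<mu>" .
  moreover have "integrable M (\<lambda>\<omega>. Y \<omega> * (w \<bullet> X \<omega>))"
    by (rule integrable_cong_AE_imp[OF _ meas(2) ae_margin]) (use moments(1) assms(6-8) in simp)
  moreover have "integrable M (\<lambda>\<omega>. (Y \<omega> * (w \<bullet> X \<omega>) - w \<bullet> \<mu>)^2)"
    using moments(3) assms(6-8) by (intro integrable_cong_AE_imp[OF _ meas(4) ae_square]) simp
  moreover have "expectation (\<lambda>\<omega>. (Y \<omega> * (w \<bullet> X \<omega>) - w \<bullet> \<mu>)^2) = (\<Sum>i\<in>UNIV. (w $ i)^2 * (\<sigma> i)^2)"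
    using integral_cong_AE[OF meas(3,4) ae_square, symmetric] moments(4) assms(6-8) by simp
  ultimately show ?thesis
    by blast
qed

lemma margin_moments_of_class_conditional_model:
  fixes M :: "'a measure" and X :: "'a \<Rightarrow> real ^ 'd" and Y :: "'a \<Rightarrow> real"
    and \<mu> w :: "real ^ 'd" and \<sigma> :: "'d \<Rightarrow> real"
  assumes "prob_space M" "X \<in> borel_measurable M" "Y \<in> borel_measurable M"
    and "\<forall>\<omega>\<in>space M. Y \<omega> \<in> {-1, 1}"
    and cond: "\<forall>c\<in>{-1, 1::real}. measure M {\<omega>\<in>space M. Y \<omega> = c} > 0 \<longrightarrow>
       (let N = uniform_measure M {\<omega>\<in>space M. Y \<omega> = c} in
          prob_space.indep_vars N (\<lambda>_. borel) (\<lambda>i \<omega>. X \<omega> $ i) UNIV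
        \<and> (\<forall>i. integrable N (\<lambda>\<omega>. (X \<omega> $ i)^2)
               \<and> (\<integral>\<omega>. X \<omega> $ i \<partial>N) = c * \<mu> $ i
               \<and> (\<integral>\<omega>. (X \<omega> $ i - (\<integral>\<omega>'. X \<omega>' $ i \<partial>N))^2 \<partial>N) = (\<sigma> i)^2))"
  shows "integrable M (\<lambda>\<omega>. Y \<omega> * (w \<bullet> X \<omega>)) \<and> (\<integral>\<omega>. Y \<omega> * (w \<bullet> X \<omega>) \<partial>M) = w \<bullet> \<mu>"
    and "integrable M (\<lambda>\<omega>. (Y \<omega> * (w \<bullet> X \<omega>) - w \<bullet> \<mu>)^2)
      \<and> (\<integral>\<omega>. (Y \<omega> * (w \<bullet> X \<omega>) - w \<bullet> \<mu>)^2 \<partial>M) = (\<Sum>i\<in>UNIV. (w $ i)^2 * (\<sigma> i)^2)"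
proof -
  note [measurable] = assms(2,3)
  have class_moments: "integrable N (\<lambda>\<omega>. Y \<omega> * (w \<bullet> X \<omega>)) \<and> (\<integral>\<omega>. Y \<omega> * (w \<bullet> X \<omega>) \<partial>N) = w \<bullet> \<mu>
      \<and> integrable N (\<lambda>\<omega>. (Y \<omega> * (w \<bullet> X \<omega>) - w \<bullet> \<mu>)^2)
      \<and> (\<integral>\<omega>. (Y \<omega> * (w \<bullet> X \<omega>) - w \<bullet> \<mu>)^2 \<partial>N) = (\<Sum>i\<in>UNIV. (w $ i)^2 * (\<sigma> i)^2)"
    if c: "c \<in> {-1, 1}" and pos: "measure M {\<omega>\<in>space M. Y \<omega> = c} > 0"
      and N_def: "N = uniform_measure M {\<omega>\<in>space M. Y \<omega> = c}" for c N
  proof -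
    interpret M: prob_space M by fact
    have class_set: "{\<omega>\<in>space M. Y \<omega> = c} \<in> sets M"
      by measurable
    interpret N: prob_space N
      unfolding N_def using pos by (intro prob_space_uniform_measure) (auto simp: M.emeasure_eq_measure)
    have class_hyps: "N.indep_vars (\<lambda>_. borel) (\<lambda>i \<omega>. X \<omega> $ i) UNIV
        \<and> (\<forall>i. integrable N (\<lambda>\<omega>. (X \<omega> $ i)^2)
               \<and> (\<integral>\<omega>. X \<omega> $ i \<partial>N) = c * \<mu> $ i
               \<and> (\<integral>\<omega>. (X \<omega> $ i - (\<integral>\<omega>'. X \<omega>' $ i \<partial>N))^2 \<partial>N) = (\<sigma> i)^2)"
      using cond c pos unfolding N_def Let_def by blast
    then have indep: "N.indep_vars (\<lambda>_. borel) (\<lambda>i \<omega>. X \<omega> $ i) UNIV"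
      and square_integrable: "integrable N (\<lambda>\<omega>. (X \<omega> $ i)^2)"
      and mean: "(\<integral>\<omega>. X \<omega> $ i \<partial>N) = c * \<mu> $ i" for i
      by blast+
    have var: "(\<integral>\<omega>. (X \<omega> $ i - c * \<mu> $ i)^2 \<partial>N) = (\<sigma> i)^2" for i
      using class_hyps unfolding mean by blast
    have "AE \<omega> in N. Y \<omega> = c"
      unfolding N_def by (rule AE_uniform_measureI[OF class_set]) auto
    moreover have "X \<in> borel_measurable N" "Y \<in> borel_measurable N"
      unfolding N_def by measurable
    ultimately show ?thesis
      using c indep square_integrable mean var by (intro N.margin_moments_given_label)
  qed
  have "(\<lambda>\<omega>. Y \<omega> * (w \<bullet> X \<omega>)) \<in> borel_measurable M"
    "(\<lambda>\<omega>. (Y \<omega> * (w \<bullet> X \<omega>) - w \<bullet> \<mu>)^2) \<in> borel_measurable M"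
    by measurable
  note by_label = integral_eq_if_conditional_integrals_eq[OF assms(1) _ assms(3,4)]
  show "integrable M (\<lambda>\<omega>. Y \<omega> * (w \<bullet> X \<omega>)) \<and> (\<integral>\<omega>. Y \<omega> * (w \<bullet> X \<omega>) \<partial>M) = w \<bullet> \<mu>"
    using class_moments[OF _ _ refl] by (intro by_label \<open>(\<lambda>\<omega>. Y \<omega> * (w \<bullet> X \<omega>)) \<in> borel_measurable M\<close>) auto
  show "integrable M (\<lambda>\<omega>. (Y \<omega> * (w \<bullet> X \<omega>) - w \<bullet> \<mu>)^2)
      \<and> (\<integral>\<omega>. (Y \<omega> * (w \<bullet> X \<omega>) - w \<bullet> \<mu>)^2 \<partial>M) = (\<Sum>i\<in>UNIV. (w $ i)^2 * (\<sigma> i)^2)"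
    using class_moments[OF _ _ refl]
    by (intro by_label \<open>(\<lambda>\<omega>. (Y \<omega> * (w \<bullet> X \<omega>) - w \<bullet> \<mu>)^2) \<in> borel_measurable M\<close>) auto
qed

theorem mainTheorem5:
  fixes M :: "'a measure" and X :: "'a \<Rightarrow> real ^ 'd" and Y :: "'a \<Rightarrow> real"
    and \<mu> :: "real ^ 'd" and \<sigma> :: "'d \<Rightarrow> real" and lam :: real and wstar :: "real ^ 'd"
  assumes "prob_space M"
    and "X \<in> borel_measurable M" and "Y \<in> borel_measurable M"
    and "\<forall>\<omega>\<in>space M. Y \<omega> \<in> {-1, 1}"
    and "\<forall>i. \<mu> $ i \<ge> 0" and "\<forall>i. \<sigma> i \<ge> 0"
    and cond: "\<forall>c\<in>{-1, 1::real}. measure M {\<omega>\<in>space M. Y \<omega> = c} > 0 \<longrightarrow>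
       (let N = uniform_measure M {\<omega>\<in>space M. Y \<omega> = c} in
          prob_space.indep_vars N (\<lambda>_. borel) (\<lambda>i \<omega>. X \<omega> $ i) UNIV
        \<and> (\<forall>i. integrable N (\<lambda>\<omega>. (X \<omega> $ i)^2)
               \<and> (\<integral>\<omega>. X \<omega> $ i \<partial>N) = c * \<mu> $ i
               \<and> (\<integral>\<omega>. (X \<omega> $ i - (\<integral>\<omega>'. X \<omega>' $ i \<partial>N))^2 \<partial>N) = (\<sigma> i)^2))"
    and "\<mu> \<noteq> 0"
    and "lam > 0"
    and "\<forall>w. hinge_risk M X Y lam wstar \<le> hinge_risk M X Y lam w"
  shows "norm wstar \<ge> 1 / norm \<mu> *
           (1 - 1/2 * (sigma_bar \<mu> \<sigma> / norm \<mu> + lam / (2 * (norm \<mu>)^2)))"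
proof -
  interpret prob_space M by fact
  define H where "H w = (\<integral>\<omega>. max 0 (1 - Y \<omega> * (w \<bullet> X \<omega>)) \<partial>M)" for w
  define v where "v = (1 / (norm \<mu>)^2) *\<^sub>R \<mu>"
  define s where "s = sigma_bar \<mu> \<sigma> / norm \<mu> / 2"
  note margin = margin_moments_of_class_conditional_model[OF assms(1-4) cond]
  have "v \<bullet> \<mu> = 1"
    using assms(8) by (simp add: v_def power2_norm_eq_inner)
  then have "H v \<le> (1 - 1 + sqrt (\<Sum>i\<in>UNIV. (v $ i)^2 * (\<sigma> i)^2)) / 2"
    using expected_hinge_le[of "\<lambda>\<omega>. Y \<omega> * (v \<bullet> X \<omega>)"] margin[of v] by (simp add: H_def)
  then have "H v \<le> s"
    using sigma_bar_div_norm[OF assms(8), of \<sigma>] by (simp add: s_def v_def)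
  moreover have "s \<ge> 0"
    by (auto simp: s_def sigma_bar_def intro!: divide_nonneg_nonneg sum_nonneg)
  moreover have "1 - w \<bullet> \<mu> \<le> H w" for w
    using expected_hinge_ge[of "\<lambda>\<omega>. Y \<omega> * (w \<bullet> X \<omega>)"] margin[of w] by (simp add: H_def)
  moreover have "convex_on UNIV H"
    unfolding H_def using margin by (intro convex_on_expected_hinge) (auto intro: finite_measure_axioms)
  ultimately have "(1 - s - lam / (4 * (norm \<mu>)^2)) / norm \<mu> \<le> norm wstar"
    using assms(8-10) by (intro hinge_minimizer_norm_lower_bound[where H = H])
      (auto simp: v_def H_def hinge_risk_def)
  moreover have "(1 - s - lam / (4 * (norm \<mu>)^2)) / norm \<mu>
      = 1 / norm \<mu> * (1 - 1/2 * (sigma_bar \<mu> \<sigma> / norm \<mu> + lam / (2 * (norm \<mu>)^2)))"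
    using assms(8) by (simp add: s_def field_simps)
  ultimately show ?thesis
    by simp
qed

end
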